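(* Let $\sigma,\eta>0$ and $\mathscr{C}$ be a family of balls as in the context. Let $B,B'\in\mathscr{C}$ with $B'\not\subset B^{(3)}$. Then \[ (1-\beta)|x_B-x_{B'}|\le|x-y|\le 2|x_B-x_{B'}|\quad\text{for all }x\in B,\ y\in B', \] where $\beta:=(1+2/\eta^2)^{-1/2}\in(0,1)$.
   Context: Cover: for constants $\sigma,\eta>0$, $\mathscr{C}$ is a family of closed balls in $\mathbb{R}^3$ with $\bigcup_{B\in\mathscr{C}}B=\mathbb{R}^3$ and $|B|\geq 4\pi/3$ for all $B\in\mathscr{C}$, such that (i) each ball in $\mathscr{C}$ intersects at most $\sigma$ balls in $\mathscr{C}$, and (ii) if $B,B'\in\mathscr{C}$ intersect then $\eta^{-1}\le |B|^{1/3}/|B'|^{1/3}\le\eta$. $x_B$ denotes the center of $B$. Layers: for $B\in\mathscr{C}$ set $B^{(0)}:=B$, $P^{(0)}:=\{B\}$, and for $n\ge1$, $P^{(n)}:=\{B'\in\mathscr{C}: B'\cap B^{(n-1)}\neq\emptyset\}$, $B^{(n)}:=\bigcup_{B'\in P^{(n)}}B'$. *)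

theory Defs
  imports "HOL-Analysis.Analysis"
begin

type_synonym R3 = "real^3"

definition is_closed_ball :: "R3 set \<Rightarrow> bool" where
  "is_closed_ball B \<longleftrightarrow> (\<exists>c r. 0 < r \<and> B = cball c r)"

definition ball_center :: "R3 set \<Rightarrow> R3" where
  "ball_center B = (SOME c. \<exists>r. 0 < r \<and> B = cball c r)"

definition vol :: "R3 set \<Rightarrow> real" where
  "vol B = measure lborel B"

definition admissible_cover :: "real \<Rightarrow> real \<Rightarrow> R3 set set \<Rightarrow> bool" where
  "admissible_cover \<sigma> \<eta> \<C> \<longleftrightarrow>
     (\<forall>B\<in>\<C>. is_closed_ball B) \<and>
     \<Union>\<C> = UNIV \<and>
     (\<forall>B\<in>\<C>. vol B \<ge> 4 * pi / 3) \<and>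
     (\<forall>B\<in>\<C>. finite {B'\<in>\<C>. B' \<inter> B \<noteq> {}} \<and> real (card {B'\<in>\<C>. B' \<inter> B \<noteq> {}}) \<le> \<sigma>) \<and>
     (\<forall>B\<in>\<C>. \<forall>B'\<in>\<C>. B \<inter> B' \<noteq> {} \<longrightarrow>
         inverse \<eta> \<le> vol B powr (1/3) / vol B' powr (1/3) \<and>
         vol B powr (1/3) / vol B' powr (1/3) \<le> \<eta>)"

primrec layer :: "R3 set set \<Rightarrow> R3 set \<Rightarrow> nat \<Rightarrow> R3 set" where
  "layer \<C> B 0 = B"
| "layer \<C> B (Suc n) = \<Union>{B'\<in>\<C>. B' \<inter> layer \<C> B n \<noteq> {}}"

end

theory Submission
  imports Defs
begin

text \<open>
  Write \<open>B = cball c r\<close> and \<open>B' = cball c' r'\<close> with \<open>r \<le> r'\<close>. As \<open>B'\<close> is not contained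
  in the third layer of \<open>B\<close>, there is no chain \<open>B, X, Y, B'\<close> of consecutively intersecting
  members of the cover. The segment \<open>[c, c']\<close> is connected and meets only finitely many
  members, all closed, so some point of it lies both in a member \<open>X\<close> missing \<open>B'\<close> and in a
  member \<open>Y\<close> meeting \<open>B'\<close>; then \<open>X\<close> misses \<open>B\<close> as well. Radii of intersecting members differ
  by a factor at most \<open>\<eta>\<close>, so the radius of \<open>X\<close> is at least \<open>r' / \<eta>\<^sup>2\<close>. Stewart's theorem for
  the cevian from the centre of \<open>X\<close> to that point, together with the disjointness of \<open>X\<close> from
  \<open>B\<close> and \<open>B'\<close>, gives \<open>|c - c'|\<^sup>2 > (1 + 2/\<eta>\<^sup>2) (r + r')\<^sup>2\<close>, i.e. \<open>r + r' \<le> \<beta> |c - c'|\<close>, and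
  both bounds follow from the triangle inequality.
\<close>

subsection \<open>Balls and segments in normed spaces\<close>

lemma dist_convex_combination:
  fixes a b :: "'a::real_normed_vector"
  shows "dist a ((1 - u) *\<^sub>R a + u *\<^sub>R b) = \<bar>u\<bar> * dist a b"
    and "dist b ((1 - u) *\<^sub>R a + u *\<^sub>R b) = \<bar>1 - u\<bar> * dist a b"
proof -
  have "a - ((1 - u) *\<^sub>R a + u *\<^sub>R b) = u *\<^sub>R (a - b)"
    "b - ((1 - u) *\<^sub>R a + u *\<^sub>R b) = (1 - u) *\<^sub>R (b - a)"
    by (simp_all add: algebra_simps)
  then show "dist a ((1 - u) *\<^sub>R a + u *\<^sub>R b) = \<bar>u\<bar> * dist a b"
    and "dist b ((1 - u) *\<^sub>R a + u *\<^sub>R b) = \<bar>1 - u\<bar> * dist a b"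
    by (simp_all add: dist_norm norm_minus_commute)
qed

lemma cball_Int_cball_nonempty:
  fixes e c :: "'a::real_normed_vector"
  assumes "0 \<le> s" "0 \<le> r" "dist e c \<le> s + r"
  shows "cball e s \<inter> cball c r \<noteq> {}"
proof (cases "s + r = 0")
  case True
  then have "e = c" using assms by simp
  then show ?thesis using assms by (metis IntI centre_in_cball empty_iff)
next
  case False
  then have sr: "s + r > 0" using assms by auto
  define u where "u = s / (s + r)"
  have u: "0 \<le> u" "u \<le> 1" "1 - u = r / (s + r)" using assms sr by (auto simp: u_def field_simps)
  define p where "p = (1 - u) *\<^sub>R e + u *\<^sub>R c"
  have "dist e p = u * dist e c"
    using dist_convex_combination(1)[of e u c] u by (simp add: p_def)
  also have "\<dots> \<le> u * (s + r)"
    using assms u by (intro mult_left_mono) auto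
  finally have "p \<in> cball e s" using sr by (simp add: u_def)
  have "dist c p = (1 - u) * dist e c"
    using dist_convex_combination(2)[of c u e] u(1,2) by (simp add: p_def dist_commute)
  also have "\<dots> \<le> (1 - u) * (s + r)"
    using assms u by (intro mult_left_mono) auto
  finally have "p \<in> cball c r" using sr u(3) by simp
  with \<open>p \<in> cball e s\<close> show ?thesis by blast
qed

lemma cball_contains_cball_near:
  fixes e w :: "'a::real_normed_vector"
  assumes "0 < \<delta>" "\<delta> \<le> \<rho>" "w \<in> cball e \<rho>"
  shows "\<exists>m. cball m \<delta> \<subseteq> cball e \<rho> \<and> dist w m \<le> \<delta>"
proof -
  have \<rho>: "0 < \<rho>" "dist e w \<le> \<rho>" using assms by auto
  define u where "u = (\<rho> - \<delta>) / \<rho>"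
  have u: "0 \<le> u" "u \<le> 1" "1 - u = \<delta> / \<rho>" using assms \<rho> by (auto simp: u_def field_simps)
  define m where "m = (1 - u) *\<^sub>R e + u *\<^sub>R w"
  have "dist e m = u * dist e w"
    using dist_convex_combination(1)[of e u w] u by (simp add: m_def)
  also have "\<dots> \<le> u * \<rho>"
    using u \<rho> by (intro mult_left_mono) auto
  also have "\<dots> = \<rho> - \<delta>" using \<rho> by (simp add: u_def field_simps)
  finally have em: "dist e m \<le> \<rho> - \<delta>" .
  have sub: "cball m \<delta> \<subseteq> cball e \<rho>"
  proof
    fix y assume "y \<in> cball m \<delta>"
    then show "y \<in> cball e \<rho>" using em dist_triangle[of e y m] by simp
  qed
  have "dist w m = (1 - u) * dist e w"
    using dist_convex_combination(2)[of w u e] u(1,2) by (simp add: m_def dist_commute)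
  also have "\<dots> \<le> (1 - u) * \<rho>"
    using u \<rho> by (intro mult_left_mono) auto
  finally have "dist w m \<le> \<delta>" using \<rho> u(3) by simp
  with sub show ?thesis by blast
qed

lemma finite_family_containing_balls:
  fixes \<I> :: "'a::real_normed_vector set set"
  assumes "compact K" "0 < \<delta>"
    and inner: "\<And>X. X \<in> \<I> \<Longrightarrow> cball (m X) \<delta> \<subseteq> X \<and> m X \<in> K"
    and nbhd: "\<And>X. X \<in> \<I> \<Longrightarrow> finite {Y \<in> \<I>. Y \<inter> X \<noteq> {}}"
  shows "finite \<I>"
proof (rule ccontr)
  assume "infinite \<I>"
  obtain T where T: "finite T" "K \<subseteq> (\<Union>p\<in>T. ball p \<delta>)"
  proof (rule compactE_image[OF \<open>compact K\<close>, of K "\<lambda>p. ball p \<delta>"])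
    show "K \<subseteq> (\<Union>p\<in>K. ball p \<delta>)"
      using \<open>0 < \<delta>\<close> by auto
  qed auto
  define f where "f X = (SOME p. p \<in> T \<and> m X \<in> ball p \<delta>)" for X
  have f: "f X \<in> T \<and> m X \<in> ball (f X) \<delta>" if "X \<in> \<I>" for X
    unfolding f_def by (rule someI_ex) (use inner[OF that] T in blast)
  then have "f ` \<I> \<subseteq> T"
    by blast
  then have "finite (f ` \<I>)"
    using T(1) by (rule finite_subset)
  then obtain X0 where X0: "X0 \<in> \<I>" "infinite {X \<in> \<I>. f X = f X0}"
    using pigeonhole_infinite[OF \<open>infinite \<I>\<close>] by blast
  have "{X \<in> \<I>. f X = f X0} \<subseteq> {Y \<in> \<I>. Y \<inter> X0 \<noteq> {}}"
  proof safe
    fix X assume X: "X \<in> \<I>" "f X = f X0" "X \<inter> X0 = {}"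
    have "dist (m X) (m X0) < \<delta> + \<delta>"
      using f[OF X(1)] f[OF X0(1)] X(2)
      by (intro dist_triangle_less_add[of _ "f X"]) (simp_all add: dist_commute)
    then have "cball (m X) \<delta> \<inter> cball (m X0) \<delta> \<noteq> {}"
      by (intro cball_Int_cball_nonempty) (use \<open>0 < \<delta>\<close> in auto)
    then show False
      using inner[OF X(1)] inner[OF X0(1)] X(3) by blast
  qed
  then have "finite {X \<in> \<I>. f X = f X0}"
    using nbhd[OF X0(1)] by (rule finite_subset)
  with X0(2) show False ..
qed

lemma connected_finite_closed_cover_crossing:
  assumes "connected S" "finite \<F>" "\<And>X. X \<in> \<F> \<Longrightarrow> closed X" "S \<subseteq> \<Union>\<F>"
    and "X0 \<in> \<F>" "P X0" "X0 \<inter> S \<noteq> {}" and "Y0 \<in> \<F>" "\<not> P Y0" "Y0 \<inter> S \<noteq> {}"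
  shows "\<exists>X\<in>\<F>. \<exists>Y\<in>\<F>. P X \<and> \<not> P Y \<and> X \<inter> Y \<inter> S \<noteq> {}"
proof -
  define A where "A = \<Union>{X \<in> \<F>. P X}"
  define B where "B = \<Union>{X \<in> \<F>. \<not> P X}"
  have "closed A" "closed B"
    unfolding A_def B_def using assms(2,3) by (auto intro: closed_Union)
  moreover have "S \<subseteq> A \<union> B" "A \<inter> S \<noteq> {}" "B \<inter> S \<noteq> {}"
    using assms(4-) unfolding A_def B_def by blast+
  ultimately have "A \<inter> B \<inter> S \<noteq> {}"
    using connected_closedD[OF \<open>connected S\<close>] by blast
  then obtain x X Y where "x \<in> S" "X \<in> \<F>" "P X" "x \<in> X" "Y \<in> \<F>" "\<not> P Y" "x \<in> Y"
    unfolding A_def B_def by blast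
  then show ?thesis by blast
qed

lemma dist_cball_cball_bounds:
  fixes c c' x y :: "'a::metric_space"
  assumes "x \<in> cball c r" "y \<in> cball c' r'" "r + r' \<le> \<beta> * dist c c'" "\<beta> \<le> 1"
  shows "(1 - \<beta>) * dist c c' \<le> dist x y" "dist x y \<le> 2 * dist c c'"
proof -
  have "dist c c' \<le> r + dist x y + r'"
    using assms(1,2) dist_triangle[of c c' x] dist_triangle[of x c' y] by (simp add: dist_commute)
  then show "(1 - \<beta>) * dist c c' \<le> dist x y"
    using assms(3) by (simp add: algebra_simps)
  have "\<beta> * dist c c' \<le> dist c c'"
    using mult_right_mono[OF assms(4) zero_le_dist[of c c']] by simp
  moreover have "dist x y \<le> r + dist c c' + r'"
    using assms(1,2) dist_triangle[of x y c] dist_triangle[of c y c'] by (simp add: dist_commute)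
  ultimately show "dist x y \<le> 2 * dist c c'"
    using assms(3) by linarith
qed

subsection \<open>A ball touching a segment between two disjoint balls\<close>

lemma stewart_theorem:
  fixes e c c' :: "'a::real_inner"
  shows "(1 - u) * (dist e c)\<^sup>2 + u * (dist e c')\<^sup>2
     = (dist e ((1 - u) *\<^sub>R c + u *\<^sub>R c'))\<^sup>2 + u * (1 - u) * (dist c c')\<^sup>2"
proof -
  have "e - ((1 - u) *\<^sub>R c + u *\<^sub>R c') = (1 - u) *\<^sub>R (e - c) + u *\<^sub>R (e - c')"
    "c - c' = (e - c') - (e - c)"
    by (simp_all add: algebra_simps)
  then show ?thesis
    unfolding dist_norm power2_norm_eq_inner
    by (simp add: inner_add_left inner_add_right inner_diff_left inner_diff_right
        inner_commute algebra_simps power2_eq_square)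
qed

lemma segment_gap_polynomial_bound:
  fixes r r' a b :: real
  assumes "0 \<le> r" "r \<le> r'" "r \<le> a" "r' \<le> b"
  shows "(r + r')\<^sup>2 * (a * b * (a + b) - b * r\<^sup>2 - a * r'\<^sup>2)
    \<le> r' * (b * r + a * r') * ((a + b)\<^sup>2 - (r + r')\<^sup>2)"
proof -
  define t x y where "t = r' - r" and "x = a - r" and "y = b - r'"
  have "0 \<le> t" "0 \<le> x" "0 \<le> y"
    using assms by (simp_all add: t_def x_def y_def)
  have "r' = r + t" "a = r + x" "b = r + t + y"
    by (simp_all add: t_def x_def y_def)
  then have "r' * (b * r + a * r') * ((a + b)\<^sup>2 - (r + r')\<^sup>2)
      - (r + r')\<^sup>2 * (a * b * (a + b) - b * r\<^sup>2 - a * r'\<^sup>2)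
    = t^2*x^2*y + t^2*x^3 + t^3*x^2 + r*t*y^3 + r*t*x^2*y + 2*r*t*x^3
       + 3*r*t^2*y^2 + 2*r*t^2*x*y + 5*r*t^2*x^2 + 2*r*t^3*y + 2*r*t^3*x
       + r^2*(x+y)*(x-y)^2 + 6*r^2*t*y^2 + 6*r^2*t*x^2 + 6*r^2*t^2*y + 6*r^2*t^2*x
       + 2*r^3*(x-y)^2 + 4*r^3*t*y + 4*r^3*t*x"
    by (simp add: algebra_simps power2_eq_square power3_eq_cube)
  moreover have "0 \<le> t^2*x^2*y + t^2*x^3 + t^3*x^2 + r*t*y^3 + r*t*x^2*y + 2*r*t*x^3
       + 3*r*t^2*y^2 + 2*r*t^2*x*y + 5*r*t^2*x^2 + 2*r*t^3*y + 2*r*t^3*x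
       + r^2*(x+y)*(x-y)^2 + 6*r^2*t*y^2 + 6*r^2*t*x^2 + 6*r^2*t^2*y + 6*r^2*t^2*x
       + 2*r^3*(x-y)^2 + 4*r^3*t*y + 4*r^3*t*x"
    using assms \<open>0 \<le> t\<close> \<open>0 \<le> x\<close> \<open>0 \<le> y\<close> by (intro add_nonneg_nonneg mult_nonneg_nonneg) auto
  ultimately show ?thesis by linarith
qed

text \<open>Here \<open>a\<close> and \<open>b\<close> are the distances from a point of the segment to its two ends, and \<open>q\<close> is
  the radius of a ball containing that point whose centre is farther than \<open>q + r\<close> and \<open>q + r'\<close>
  from those ends.\<close>

lemma segment_gap_bound:
  fixes a b r r' q K :: real
  assumes "0 < r" "r \<le> r'" "r < a" "r' < b" "0 \<le> K" "K * r' \<le> q"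
    and "b * (q + r)\<^sup>2 + a * (q + r')\<^sup>2 < (a + b) * q\<^sup>2 + a * b * (a + b)"
  shows "(r + r')\<^sup>2 * (1 + 2 * K) < (a + b)\<^sup>2"
proof -
  define S W where "S = (r + r')\<^sup>2" and "W = r' * (b * r + a * r')"
  have "0 < S" "0 < W"
    using assms by (simp_all add: S_def W_def add_pos_pos)
  have "K * r' * (b * r + a * r') \<le> q * (b * r + a * r')"
    using assms by (intro mult_right_mono) auto
  then have "2 * K * W \<le> 2 * q * (b * r + a * r')"
    unfolding W_def by (simp add: algebra_simps)
  also have "\<dots> < a * b * (a + b) - b * r\<^sup>2 - a * r'\<^sup>2"
    using assms(7) by (simp add: algebra_simps power2_eq_square)
  finally have "S * (2 * K * W) < S * (a * b * (a + b) - b * r\<^sup>2 - a * r'\<^sup>2)"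
    using \<open>0 < S\<close> by simp
  also have "\<dots> \<le> W * ((a + b)\<^sup>2 - S)"
    using segment_gap_polynomial_bound[of r r' a b] assms unfolding S_def W_def by simp
  finally have "W * (S * (2 * K)) < W * ((a + b)\<^sup>2 - S)"
    by (simp add: algebra_simps)
  then have "S * (2 * K) < (a + b)\<^sup>2 - S"
    using \<open>0 < W\<close> by simp
  then show ?thesis
    unfolding S_def by (simp add: algebra_simps)
qed

lemma cball_meeting_segment_between_disjoint_cballs:
  fixes c c' e x :: "'a::real_inner"
  assumes x: "x \<in> closed_segment c c'" "x \<in> cball e s"
    and disj: "cball e s \<inter> cball c r = {}" "cball e s \<inter> cball c' r' = {}"
    and "0 < r" "r \<le> r'" "0 \<le> K" "K * r' \<le> s"
  shows "(r + r')\<^sup>2 * (1 + 2 * K) < (dist c c')\<^sup>2"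
proof -
  define d where "d = dist c c'"
  obtain u where u: "0 \<le> u" "u \<le> 1" "x = (1 - u) *\<^sub>R c + u *\<^sub>R c'"
    using x(1) unfolding closed_segment_def by blast
  have "0 \<le> s" using x(2) by (meson mem_cball order_trans zero_le_dist)
  have far: "s + r < dist e c" "s + r' < dist e c'"
    using disj cball_Int_cball_nonempty[of s r e c] cball_Int_cball_nonempty[of s r' e c']
      \<open>0 \<le> s\<close> assms(5,6) by force+
  have a: "r < u * d"
    using disj(1) x(2) dist_convex_combination(1)[of c u c'] u by (auto simp: d_def)
  have b: "r' < (1 - u) * d"
    using disj(2) x(2) dist_convex_combination(2)[of c' u c] u by (auto simp: d_def)
  have "d \<noteq> 0" using a \<open>0 < r\<close> by auto
  then have "0 < d" by (simp add: d_def)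
  have "(1 - u) * (s + r)\<^sup>2 + u * (s + r')\<^sup>2 < (1 - u) * (dist e c)\<^sup>2 + u * (dist e c')\<^sup>2"
  proof -
    have "u \<noteq> 0" "u \<noteq> 1" using a b assms(5,6) by auto
    with u(1,2) have "0 < u" "0 < 1 - u" by auto
    moreover have "(s + r)\<^sup>2 < (dist e c)\<^sup>2" "(s + r')\<^sup>2 < (dist e c')\<^sup>2"
      using far \<open>0 \<le> s\<close> assms(5,6) by (auto intro!: power_strict_mono)
    ultimately show ?thesis
      by (intro add_strict_mono mult_strict_left_mono)
  qed
  also have "\<dots> = (dist e x)\<^sup>2 + u * (1 - u) * d\<^sup>2"
    using stewart_theorem[of u e c c'] u by (simp add: d_def)
  also have "\<dots> \<le> s\<^sup>2 + u * (1 - u) * d\<^sup>2"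
    using x(2) by (simp add: power_mono)
  finally have "d * ((1 - u) * (s + r)\<^sup>2 + u * (s + r')\<^sup>2) < d * (s\<^sup>2 + u * (1 - u) * d\<^sup>2)"
    using \<open>0 < d\<close> by (intro mult_strict_left_mono)
  then have "(1 - u) * d * (s + r)\<^sup>2 + u * d * (s + r')\<^sup>2
      < (u * d + (1 - u) * d) * s\<^sup>2 + u * d * ((1 - u) * d) * (u * d + (1 - u) * d)"
    by (simp add: algebra_simps power2_eq_square)
  from segment_gap_bound[OF \<open>0 < r\<close> \<open>r \<le> r'\<close> a b \<open>0 \<le> K\<close> \<open>K * r' \<le> s\<close> this]
  show ?thesis
    by (simp add: d_def algebra_simps)
qed

lemma le_powr_neg_half_mult:
  fixes t k d :: real
  assumes "0 < k" "0 \<le> d" "t\<^sup>2 * k \<le> d\<^sup>2"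
  shows "t \<le> k powr (-1/2) * d"
proof -
  have "(t * sqrt k)\<^sup>2 \<le> d\<^sup>2"
    using assms by (simp add: power_mult_distrib)
  then have "t * sqrt k \<le> d"
    using assms(2) by (rule power2_le_imp_le)
  moreover have "k powr (-1/2) * d = d / sqrt k"
    using assms(1) by (simp add: powr_minus_divide powr_half_sqrt flip: powr_minus)
  ultimately show ?thesis
    using assms(1) by (simp add: pos_le_divide_eq)
qed

subsection \<open>Admissible covers\<close>

lemma vol_cball: "0 \<le> \<rho> \<Longrightarrow> vol (cball (e::R3) \<rho>) = 4/3 * pi * \<rho>^3"
  unfolding vol_def using content_cball[of \<rho> e] by (simp add: unit_ball_vol_3)

lemma vol_cball_powr_third:
  assumes "0 \<le> \<rho>"
  shows "vol (cball (e::R3) \<rho>) powr (1/3) = (4/3 * pi) powr (1/3) * \<rho>"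
proof -
  have "vol (cball e \<rho>) powr (1/3) = (4/3 * pi) powr (1/3) * (\<rho>^3) powr (1/3)"
    unfolding vol_cball[OF assms] by (rule powr_mult)
  also have "(\<rho>^3) powr (1/3) = root 3 (\<rho>^3)"
    using assms by (simp add: root_powr_inverse)
  also have "\<dots> = \<rho>"
    using assms by (simp add: real_root_power_cancel)
  finally show ?thesis .
qed

lemma ball_center_cball: "0 < r \<Longrightarrow> ball_center (cball c r) = c"
  unfolding ball_center_def by (rule some_equality) (auto simp: cball_eq_cball_iff)

lemma admissible_cover_ballE:
  assumes "admissible_cover \<sigma> \<eta> \<C>" "X \<in> \<C>"
  obtains e \<rho> where "1 \<le> \<rho>" "X = cball e \<rho>"
proof -
  have "is_closed_ball X" "4 * pi / 3 \<le> vol X"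
    using assms unfolding admissible_cover_def by blast+
  then obtain e \<rho> where \<rho>: "0 < \<rho>" "X = cball e \<rho>" "4 * pi / 3 \<le> vol X"
    unfolding is_closed_ball_def by blast
  then have "4 * pi / 3 \<le> 4/3 * pi * \<rho>^3"
    by (simp add: vol_cball)
  then have "1^3 \<le> \<rho>^3" by simp
  then have "1 \<le> \<rho>"
    using \<rho> power_strict_mono[of \<rho> 1 3] by (cases "\<rho> < 1") auto
  with \<rho> that show ?thesis by blast
qed

lemma admissible_cover_radius_ratio:
  assumes "admissible_cover \<sigma> \<eta> \<C>" "0 < \<eta>"
    and "cball e \<rho> \<in> \<C>" "cball e' \<rho>' \<in> \<C>" "0 < \<rho>" "0 < \<rho>'"
    and "cball e \<rho> \<inter> cball e' \<rho>' \<noteq> {}"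
  shows "\<rho>' \<le> \<eta> * \<rho>"
proof -
  have "inverse \<eta> \<le> vol (cball e \<rho>) powr (1/3) / vol (cball e' \<rho>') powr (1/3)"
    using assms unfolding admissible_cover_def by blast
  also have "\<dots> = \<rho> / \<rho>'"
    using assms by (simp add: vol_cball_powr_third)
  finally show ?thesis
    using assms by (simp add: field_simps)
qed

lemma admissible_cover_locally_finite:
  assumes adm: "admissible_cover \<sigma> \<eta> \<C>" and "bounded S"
  shows "finite {X \<in> \<C>. X \<inter> S \<noteq> {}}"
proof -
  obtain z R where S: "S \<subseteq> cball z R"
    using \<open>bounded S\<close> bounded_subset_cball by blast
  have "\<exists>m. cball m 1 \<subseteq> X \<and> m \<in> cball z (R + 1)" if X: "X \<in> \<C>" "X \<inter> S \<noteq> {}" for X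
  proof -
    obtain e \<rho> where \<rho>: "1 \<le> \<rho>" "X = cball e \<rho>"
      using admissible_cover_ballE[OF adm X(1)] .
    obtain w where w: "w \<in> X" "w \<in> S" using X(2) by blast
    obtain m where m: "cball m 1 \<subseteq> X" "dist w m \<le> 1"
      using cball_contains_cball_near[of 1 \<rho> w e] \<rho> w by auto
    have "dist z m \<le> R + 1"
      using dist_triangle[of z m w] m(2) w(2) S by auto
    with m(1) show ?thesis by auto
  qed
  then obtain m where m: "\<And>X. X \<in> {X \<in> \<C>. X \<inter> S \<noteq> {}} \<Longrightarrow> cball (m X) 1 \<subseteq> X \<and> m X \<in> cball z (R + 1)"
    by (metis (mono_tags, lifting) mem_Collect_eq)
  have "finite {Y \<in> {X \<in> \<C>. X \<inter> S \<noteq> {}}. Y \<inter> X \<noteq> {}}" if "X \<in> {X \<in> \<C>. X \<inter> S \<noteq> {}}" for X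
  proof (rule finite_subset)
    show "finite {Y \<in> \<C>. Y \<inter> X \<noteq> {}}"
      using adm that unfolding admissible_cover_def by blast
  qed blast
  from finite_family_containing_balls[OF compact_cball zero_less_one m this] show ?thesis .
qed

lemma subset_layer_Suc: "X \<in> \<C> \<Longrightarrow> X \<inter> layer \<C> B n \<noteq> {} \<Longrightarrow> X \<subseteq> layer \<C> B (Suc n)"
  by auto

lemma chain_subset_layer_3:
  assumes "X \<in> \<C>" "Y \<in> \<C>" "B' \<in> \<C>"
    and "X \<inter> B \<noteq> {}" "X \<inter> Y \<noteq> {}" "Y \<inter> B' \<noteq> {}"
  shows "B' \<subseteq> layer \<C> B 3"
proof -
  have "X \<subseteq> layer \<C> B (Suc 0)"
    by (rule subset_layer_Suc) (use assms in simp_all)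
  then have "Y \<subseteq> layer \<C> B (Suc (Suc 0))"
    by (intro subset_layer_Suc) (use assms in blast)+
  then have "B' \<subseteq> layer \<C> B (Suc (Suc (Suc 0)))"
    by (intro subset_layer_Suc) (use assms in blast)+
  then show ?thesis
    by (simp only: numeral_3_eq_3)
qed

lemma admissible_cover_segment_crossing:
  assumes adm: "admissible_cover \<sigma> \<eta> \<C>"
    and B: "cball c r \<in> \<C>" and B': "cball c' r' \<in> \<C>" and "0 \<le> r" "0 \<le> r'"
    and disj: "cball c r \<inter> cball c' r' = {}"
  obtains X Y x where "X \<in> \<C>" "X \<inter> cball c' r' = {}" "Y \<in> \<C>" "Y \<inter> cball c' r' \<noteq> {}"
    "x \<in> X" "x \<in> Y" "x \<in> closed_segment c c'"
proof -
  define S where "S = closed_segment c c'"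
  define \<F> where "\<F> = {X \<in> \<C>. X \<inter> S \<noteq> {}}"
  have fin: "finite \<F>"
    unfolding \<F>_def S_def by (rule admissible_cover_locally_finite[OF adm bounded_closed_segment])
  have closed_members: "closed X" if X: "X \<in> \<F>" for X
  proof -
    obtain e \<rho> where "X = cball e \<rho>"
      using admissible_cover_ballE[OF adm] X unfolding \<F>_def by blast
    then show ?thesis by simp
  qed
  have cover: "S \<subseteq> \<Union>\<F>"
    using adm unfolding admissible_cover_def \<F>_def by blast
  have "c \<in> cball c r" "c' \<in> cball c' r'"
    using \<open>0 \<le> r\<close> \<open>0 \<le> r'\<close> by auto
  then have ends: "cball c r \<in> \<F>" "cball c r \<inter> S \<noteq> {}" "cball c' r' \<in> \<F>" "cball c' r' \<inter> S \<noteq> {}"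
      "\<not> cball c' r' \<inter> cball c' r' = {}"
    using B B' ends_in_segment[of c c'] unfolding \<F>_def S_def by blast+
  from connected_finite_closed_cover_crossing[where P = "\<lambda>X. X \<inter> cball c' r' = {}",
      OF _ fin closed_members cover ends(1) disj ends(2,3,5,4)]
  obtain X Y where "X \<in> \<F>" "X \<inter> cball c' r' = {}" "Y \<in> \<F>" "Y \<inter> cball c' r' \<noteq> {}"
    "X \<inter> Y \<inter> S \<noteq> {}"
    by (auto simp: S_def)
  then show thesis
    using that unfolding \<F>_def S_def by blast
qed

lemma admissible_cover_centres_far_le:
  assumes adm: "admissible_cover \<sigma> \<eta> \<C>" and "0 < \<eta>"
    and B: "cball c r \<in> \<C>" and B': "cball c' r' \<in> \<C>" and "0 < r" "r \<le> r'"
    and no_chain: "\<And>X Y. X \<in> \<C> \<Longrightarrow> Y \<in> \<C> \<Longrightarrow> X \<inter> cball c r \<noteq> {} \<Longrightarrow> X \<inter> Y \<noteq> {}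
      \<Longrightarrow> Y \<inter> cball c' r' \<noteq> {} \<Longrightarrow> False"
  shows "(r + r')\<^sup>2 * (1 + 2 / \<eta>\<^sup>2) < (dist c c')\<^sup>2"
proof -
  have "0 \<le> r" "0 \<le> r'"
    using \<open>0 < r\<close> \<open>r \<le> r'\<close> by auto
  then have "c \<in> cball c r" "c' \<in> cball c' r'"
    by auto
  then have disj: "cball c r \<inter> cball c' r' = {}"
    using no_chain[OF B B'] by blast
  obtain X Y x where X: "X \<in> \<C>" "X \<inter> cball c' r' = {}" and Y: "Y \<in> \<C>" "Y \<inter> cball c' r' \<noteq> {}"
    and x: "x \<in> X" "x \<in> Y" "x \<in> closed_segment c c'"
    by (rule admissible_cover_segment_crossing[OF adm B B' \<open>0 \<le> r\<close> \<open>0 \<le> r'\<close> disj])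
  have "X \<inter> cball c r = {}"
    using no_chain[OF X(1) Y(1) _ _ Y(2)] x by blast
  obtain e s where s: "1 \<le> s" "X = cball e s"
    using admissible_cover_ballE[OF adm X(1)] .
  obtain e2 \<rho> where \<rho>: "1 \<le> \<rho>" "Y = cball e2 \<rho>"
    using admissible_cover_ballE[OF adm Y(1)] .
  have "cball e s \<inter> cball e2 \<rho> \<noteq> {}"
    using x s \<rho> by blast
  then have "\<rho> \<le> \<eta> * s"
    using admissible_cover_radius_ratio[OF adm \<open>0 < \<eta>\<close>, of e s e2 \<rho>] X(1) Y(1) s \<rho> by simp
  have "r' \<le> \<eta> * \<rho>"
    using admissible_cover_radius_ratio[OF adm \<open>0 < \<eta>\<close>, of e2 \<rho> c' r'] \<rho> Y B' \<open>0 < r\<close> \<open>r \<le> r'\<close> by auto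
  also have "\<dots> \<le> \<eta> * (\<eta> * s)"
    using \<open>\<rho> \<le> \<eta> * s\<close> \<open>0 < \<eta>\<close> by simp
  finally have "1 / \<eta>\<^sup>2 * r' \<le> s"
    using \<open>0 < \<eta>\<close> by (simp add: field_simps power2_eq_square)
  from cball_meeting_segment_between_disjoint_cballs[OF _ _ _ _ \<open>0 < r\<close> \<open>r \<le> r'\<close> _ this] x s
    \<open>X \<inter> cball c r = {}\<close> X(2)
  show ?thesis
    by simp
qed

lemma admissible_cover_centres_far:
  assumes adm: "admissible_cover \<sigma> \<eta> \<C>" and "0 < \<eta>"
    and B: "cball c r \<in> \<C>" and B': "cball c' r' \<in> \<C>" and "0 < r" "0 < r'"
    and no_chain: "\<And>X Y. X \<in> \<C> \<Longrightarrow> Y \<in> \<C> \<Longrightarrow> X \<inter> cball c r \<noteq> {} \<Longrightarrow> X \<inter> Y \<noteq> {}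
      \<Longrightarrow> Y \<inter> cball c' r' \<noteq> {} \<Longrightarrow> False"
  shows "(r + r')\<^sup>2 * (1 + 2 / \<eta>\<^sup>2) < (dist c c')\<^sup>2"
proof (cases "r \<le> r'")
  case True
  from admissible_cover_centres_far_le[OF adm \<open>0 < \<eta>\<close> B B' \<open>0 < r\<close> True no_chain] show ?thesis .
next
  case False
  have "(r' + r)\<^sup>2 * (1 + 2 / \<eta>\<^sup>2) < (dist c' c)\<^sup>2"
  proof (rule admissible_cover_centres_far_le[OF adm \<open>0 < \<eta>\<close> B' B \<open>0 < r'\<close>])
    show "r' \<le> r" using False by simp
    show False if "X \<in> \<C>" "Y \<in> \<C>" "X \<inter> cball c' r' \<noteq> {}" "X \<inter> Y \<noteq> {}" "Y \<inter> cball c r \<noteq> {}"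
      for X Y
      using no_chain[OF that(2,1) that(5)] that(3,4) by (simp add: Int_commute)
  qed
  then show ?thesis
    by (simp add: add.commute dist_commute)
qed

theorem lemma3p4:
  fixes \<sigma> \<eta> :: real and \<C> :: "R3 set set" and B B' :: "R3 set"
  assumes "\<sigma> > 0" and "\<eta> > 0"
    and "admissible_cover \<sigma> \<eta> \<C>"
    and "B \<in> \<C>" and "B' \<in> \<C>"
    and "\<not> B' \<subseteq> layer \<C> B 3"
  shows "(let \<beta> = (1 + 2 / \<eta>\<^sup>2) powr (-1/2) in
           0 < \<beta> \<and> \<beta> < 1 \<and>
           (\<forall>x\<in>B. \<forall>y\<in>B'.
              (1 - \<beta>) * dist (ball_center B) (ball_center B') \<le> dist x y \<and>
              dist x y \<le> 2 * dist (ball_center B) (ball_center B')))"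
proof -
  obtain c r where B: "1 \<le> r" "B = cball c r"
    using admissible_cover_ballE[OF assms(3,4)] .
  obtain c' r' where B': "1 \<le> r'" "B' = cball c' r'"
    using admissible_cover_ballE[OF assms(3,5)] .
  have C: "cball c r \<in> \<C>" "cball c' r' \<in> \<C>" and "0 < r" "0 < r'"
    using assms(4,5) B B' by simp_all
  have no_chain: "False"
    if "X \<in> \<C>" "Y \<in> \<C>" "X \<inter> cball c r \<noteq> {}" "X \<inter> Y \<noteq> {}" "Y \<inter> cball c' r' \<noteq> {}" for X Y
    using chain_subset_layer_3[OF that(1,2) assms(5)] that(3-) assms(6) B(2) B'(2) by blast
  have "(r + r')\<^sup>2 * (1 + 2 / \<eta>\<^sup>2) < (dist c c')\<^sup>2"
    using admissible_cover_centres_far[OF assms(3,2) C \<open>0 < r\<close> \<open>0 < r'\<close> no_chain] .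
  define \<beta> where "\<beta> = (1 + 2 / \<eta>\<^sup>2) powr (-1/2)"
  have base: "1 < 1 + 2 / \<eta>\<^sup>2"
    using \<open>\<eta> > 0\<close> by simp
  then have "0 < \<beta>"
    unfolding \<beta>_def powr_gt_zero by linarith
  moreover have "\<beta> < 1"
    unfolding \<beta>_def using base by (rule powr_less_one) simp
  moreover have "r + r' \<le> \<beta> * dist c c'"
    unfolding \<beta>_def using \<open>(r + r')\<^sup>2 * _ < _\<close>
    by (intro le_powr_neg_half_mult) (auto simp: add_pos_nonneg)
  ultimately show ?thesis
    unfolding Let_def \<beta>_def[symmetric] B(2) B'(2)
      ball_center_cball[OF \<open>0 < r\<close>] ball_center_cball[OF \<open>0 < r'\<close>]
    using dist_cball_cball_bounds[of _ c r _ c' r' \<beta>] by auto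
qed

end
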